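(* Let $k\in\omega\setminus\{0,1\}$, let $A$ be a nontrivial closed class of decision tables from $\mathcal M_k^\infty$, $\psi$ a bounded complexity measure, and suppose the function $L_{\psi,A}$ is everywhere defined. Then for every $n\in\omega$ with $L_{\psi,A}(n)>0$, the value $\mathcal H^\infty_{\psi,A}(n)$ is defined and $\mathcal H^\infty_{\psi,A}(n)\ge\log_k L_{\psi,A}(n)$.
   Context: Notation: $\omega=\{0,1,2,\dots\}$; $\mathcal P(\omega)$ is the set of nonempty finite subsets of $\omega$; for $k\in\omega\setminus\{0,1\}$, $E_k=\{0,1,\dots,k-1\}$. $P=\{f_i:i\in\omega\}$ is a set of attributes, $f_i\neq f_j$ for $i\ne j$. Decision tables: $\mathcal M_k^\infty$ is the set of rectangular tables filled with numbers from $E_k$, whose columns are labeled with pairwise different attributes from $P$, whose rows are pairwise different, and each row of which is labeled with a set from $\mathcal P(\omega)$ (its set of decisions). The empty table (no rows) is denoted $\Lambda$ and belongs to $\mathcal M_k^\infty$. For $T\in\mathcal M_k^\infty$: $\Delta(T)$ is the set of rows; $\Pi(T)$ is the intersection of the decision sets of all rows (common decisions); $\mathrm{At}(T)$ is the set of attributes labeling columns. For nonempty $T$, $\Omega_k(T)$ is the set of finite words (including the empty word $\lambda$) over the alphabet $\{(f_i,\delta):f_i\in\mathrm{At}(T),\delta\in E_k\}$; for $\alpha=(f_{i_1},\delta_1)\cdots(f_{i_m},\delta_m)$, $T\alpha$ is the subtable of $T$ consisting of the rows having value $\delta_j$ in the column $f_{i_j}$ for all $j$, and $T\lambda=T$.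 Operations: for $D\subseteq\mathrm{At}(T)$, $I(D,T)$ is obtained from $T$ by deleting the columns labeled with attributes from $D$ and, in each group of rows coinciding on the remaining columns, keeping only the first row; $I(\mathrm{At}(T),T)=\Lambda$. For $\nu:E_k^{|\mathrm{At}(T)|}\to\mathcal P(\omega)$, $J(\nu,T)$ is obtained by replacing the decision set of each row $\bar\delta$ by $\nu(\bar\delta)$. $[T]=\{J(\nu,I(D,T)):D\subseteq\mathrm{At}(T),\ \nu:E_k^{|\mathrm{At}(T)\setminus D|}\to\mathcal P(\omega)\}$; for nonempty $A\subseteq\mathcal M_k^\infty$, $[A]=\bigcup_{T\in A}[T]$. $A$ is a closed class if $[A]=A$; nontrivial if it contains a nonempty table. Decision trees: a $k$-decision tree is a finite directed rooted tree with at least two nodes in which the root and the edges leaving the root are unlabeled, each terminal node is labeled with a decision from $\omega$, and each other node is labeled with an attribute from $P$, each edge leaving such a node being labeled with a number from $E_k$. $\mathrm{At}(\Gamma)$ is the set of attributes labeling nodes of $\Gamma$. For a complete path $\tau=v_1,d_1,\dots,v_m,d_m,v_{m+1}$ (from the root to a terminal node), $\pi(\tau)=\lambda$ if $m=1$, and otherwise $\pi(\tau)=(f_{i_2},\delta_2)\cdots(f_{i_m},\delta_m)$ where $v_j$ is labeled $f_{i_j}$ and $d_j$ is labeled $\delta_j$; $T(\tau)=T\pi(\tau)$. For $T\ne\Lambda$, a nondeterministic decision tree for $T$ is a $k$-decision tree $\Gamma$ with $\mathrm{At}(\Gamma)\subseteq\mathrm{At}(T)$ such that every row of $T$ belongs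 to $T(\tau)$ for some complete path $\tau$, and for every complete path $\tau$ either $T(\tau)=\Lambda$ or the decision at the terminal node of $\tau$ belongs to $\Pi(T(\tau))$. A deterministic decision tree for $T$ is a nondeterministic decision tree for $T$ in which, additionally, exactly one edge leaves the root and the edges leaving any node that is neither the root nor terminal are labeled with pairwise different numbers. Complexity measures: a partially bounded complexity measure is a function $\psi:P^*\to\omega$ on finite words over $P$ such that for all words $\alpha_1,\alpha_2$: $\psi(\alpha_1)=0$ iff $\alpha_1=\lambda$; $\psi(\alpha_1)$ is invariant under permutation of letters; $\psi(\alpha_1)\le\psi(\alpha_1\alpha_2)$; $\psi(\alpha_1\alpha_2)\le\psi(\alpha_1)+\psi(\alpha_2)$. It is bounded if in addition $\psi(\alpha)\ge|\alpha|$ for all $\alpha$. $\psi$ is extended to words $(f_{i_1},\delta_1)\cdots(f_{i_m},\delta_m)$ by $\psi(f_{i_1}\cdots f_{i_m})$ ($\psi(\lambda)=0$). For a $k$-decision tree $\Gamma$, $\psi(\Gamma)=\max_\tau\psi(\pi(\tau))$ over complete paths. For $T\ne\Lambda$, $\psi^d(T)$ (resp. $\psi^a(T)$) is the minimum of $\psi(\Gamma)$ over deterministic (resp. nondeterministic) decision trees $\Gamma$ for $T$; $\psi^d(\Lambda)=\psi^a(\Lambda)=0$. Covers: for $T\ne\Lambda$ and $n\in\omega$, $\Omega_k^n(T)=\{\alpha\in\Omega_k(T):\psi(\alpha)\le n\}$. A finite set $U\subseteq\Omega_k^n(T)$ is a $(\psi,n)$-cover of $T$ if $\bigcup_{\alpha\in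 U}\Delta(T\alpha)=\Delta(T)$; it is irreducible if no proper subset of $U$ is a $(\psi,n)$-cover of $T$. $l_\psi(T,n)$ is the maximum cardinality of an irreducible $(\psi,n)$-cover of $T$; $l_\psi(\Lambda,n)=0$. $L_{\psi,A}(n)$ is undefined if $\{l_\psi(T,n):T\in A\}$ is infinite, and otherwise equals its maximum. $\mathcal H^\infty_{\psi,A}(n)$ is undefined if $\{\psi^d(T):T\in A,\ \psi^a(T)\le n\}$ is infinite, and otherwise equals its maximum. *)

theory Defs
  imports Complex_Main "HOL-Library.Multiset"
begin

text \<open>Attributes f_i are represented by their index i :: nat, decisions by nat,
 values of E_k by nat (< k).  A table is a pair (column attribute list, row list);
 each row is a pair (value list, decision set).  Row order is kept because the
 operation I keeps the first row of each group.\<close>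

type_synonym dtable = "nat list \<times> (nat list \<times> nat set) list"

definition Lambda :: dtable where "Lambda = ([], [])"

definition At :: "dtable \<Rightarrow> nat set" where "At T = set (fst T)"

definition Delta :: "dtable \<Rightarrow> (nat list \<times> nat set) set" where "Delta T = set (snd T)"

definition wf_table :: "nat \<Rightarrow> dtable \<Rightarrow> bool" where
  "wf_table k T \<longleftrightarrow>
     distinct (fst T) \<and> distinct (map fst (snd T)) \<and>
     (\<forall>rd \<in> set (snd T). length (fst rd) = length (fst T) \<and> (\<forall>v \<in> set (fst rd). v < k)
        \<and> finite (snd rd) \<and> snd rd \<noteq> {}) \<and>
     (snd T = [] \<longleftrightarrow> fst T = [])"

definition M_inf :: "nat \<Rightarrow> dtable set" where "M_inf k = {T. wf_table k T}"

definition Pi_rows :: "(nat list \<times> nat set) list \<Rightarrow> nat set" where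
  "Pi_rows rs = (\<Inter>rd \<in> set rs. snd rd)"

definition sat :: "dtable \<Rightarrow> (nat \<times> nat) list \<Rightarrow> nat list \<Rightarrow> bool" where
  "sat T \<alpha> r \<longleftrightarrow> (\<forall>p \<in> set \<alpha>. \<exists>i < length (fst T). fst T ! i = fst p \<and> r ! i = snd p)"

definition sub :: "dtable \<Rightarrow> (nat \<times> nat) list \<Rightarrow> (nat list \<times> nat set) list" where
  "sub T \<alpha> = filter (\<lambda>rd. sat T \<alpha> (fst rd)) (snd T)"

definition Omega :: "nat \<Rightarrow> dtable \<Rightarrow> (nat \<times> nat) list set" where
  "Omega k T = {\<alpha>. \<forall>p \<in> set \<alpha>. fst p \<in> At T \<and> snd p < k}"

definition keep_first :: "('a \<times> 'b) list \<Rightarrow> ('a \<times> 'b) list" where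
  "keep_first xs = [xs ! i. i \<leftarrow> [0..<length xs], \<forall>j < i. fst (xs ! j) \<noteq> fst (xs ! i)]"

definition I_op :: "nat set \<Rightarrow> dtable \<Rightarrow> dtable" where
  "I_op D T = (if set (fst T) \<subseteq> D then Lambda else
     (filter (\<lambda>f. f \<notin> D) (fst T),
      keep_first (map (\<lambda>rd. ([fst rd ! i. i \<leftarrow> [0..<length (fst T)], fst T ! i \<notin> D], snd rd)) (snd T))))"

definition J_op :: "(nat list \<Rightarrow> nat set) \<Rightarrow> dtable \<Rightarrow> dtable" where
  "J_op \<nu> T = (fst T, map (\<lambda>rd. (fst rd, \<nu> (fst rd))) (snd T))"

text \<open>nu : E_k^m \<rightarrow> P(omega) (nonempty finite sets); values outside E_k^m are irrelevant.\<close>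
definition valid_nu :: "nat \<Rightarrow> nat \<Rightarrow> (nat list \<Rightarrow> nat set) \<Rightarrow> bool" where
  "valid_nu k m \<nu> \<longleftrightarrow> (\<forall>r. length r = m \<and> (\<forall>v \<in> set r. v < k) \<longrightarrow> finite (\<nu> r) \<and> \<nu> r \<noteq> {})"

definition closure_table :: "nat \<Rightarrow> dtable \<Rightarrow> dtable set" where
  "closure_table k T = {J_op \<nu> (I_op D T) | D \<nu>. D \<subseteq> At T \<and> valid_nu k (card (At T - D)) \<nu>}"

definition closure_class :: "nat \<Rightarrow> dtable set \<Rightarrow> dtable set" where
  "closure_class k A = (\<Union>T \<in> A. closure_table k T)"

definition closed_class :: "nat \<Rightarrow> dtable set \<Rightarrow> bool" where
  "closed_class k A \<longleftrightarrow> A \<noteq> {} \<and> A \<subseteq> M_inf k \<and> closure_class k A = A"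

definition nontrivial :: "dtable set \<Rightarrow> bool" where
  "nontrivial A \<longleftrightarrow> (\<exists>T \<in> A. snd T \<noteq> [])"

text \<open>A node below the root: terminal node labelled with a decision, or a node labelled
 with an attribute with a list of (edge label, child).  A k-decision tree is given by the
 (nonempty) list of children of its unlabelled root.\<close>
datatype dnode = Leaf nat | Node nat "(nat \<times> dnode) list"

type_synonym dtree = "dnode list"

fun wf_node :: "nat \<Rightarrow> dnode \<Rightarrow> bool" where
  "wf_node k (Leaf d) = True"
| "wf_node k (Node f cs) = (cs \<noteq> [] \<and> (\<forall>p \<in> set cs. fst p < k \<and> wf_node k (snd p)))"

definition ktree :: "nat \<Rightarrow> dtree \<Rightarrow> bool" where
  "ktree k \<Gamma> \<longleftrightarrow> \<Gamma> \<noteq> [] \<and> (\<forall>c \<in> set \<Gamma>. wf_node k c)"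

fun det_node :: "dnode \<Rightarrow> bool" where
  "det_node (Leaf d) = True"
| "det_node (Node f cs) = (distinct (map fst cs) \<and> (\<forall>p \<in> set cs. det_node (snd p)))"

inductive att_of :: "nat \<Rightarrow> dnode \<Rightarrow> bool" where
  "att_of f (Node f cs)"
| "p \<in> set cs \<Longrightarrow> att_of g (snd p) \<Longrightarrow> att_of g (Node f cs)"

definition At_tree :: "dtree \<Rightarrow> nat set" where
  "At_tree \<Gamma> = {f. \<exists>c \<in> set \<Gamma>. att_of f c}"

inductive npath :: "dnode \<Rightarrow> (nat \<times> nat) list \<Rightarrow> nat \<Rightarrow> bool" where
  "npath (Leaf d) [] d"
| "p \<in> set cs \<Longrightarrow> npath (snd p) \<alpha> d \<Longrightarrow> npath (Node f cs) ((f, fst p) # \<alpha>) d"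

text \<open>Complete paths tau of Gamma, given by pi(tau) and the terminal decision.\<close>
definition cpath :: "dtree \<Rightarrow> (nat \<times> nat) list \<Rightarrow> nat \<Rightarrow> bool" where
  "cpath \<Gamma> \<alpha> d \<longleftrightarrow> (\<exists>c \<in> set \<Gamma>. npath c \<alpha> d)"

definition is_ndt :: "nat \<Rightarrow> dtable \<Rightarrow> dtree \<Rightarrow> bool" where
  "is_ndt k T \<Gamma> \<longleftrightarrow> ktree k \<Gamma> \<and> At_tree \<Gamma> \<subseteq> At T \<and>
     (\<forall>rd \<in> Delta T. \<exists>\<alpha> d. cpath \<Gamma> \<alpha> d \<and> rd \<in> set (sub T \<alpha>)) \<and>
     (\<forall>\<alpha> d. cpath \<Gamma> \<alpha> d \<longrightarrow> sub T \<alpha> = [] \<or> d \<in> Pi_rows (sub T \<alpha>))"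

definition is_dt :: "nat \<Rightarrow> dtable \<Rightarrow> dtree \<Rightarrow> bool" where
  "is_dt k T \<Gamma> \<longleftrightarrow> is_ndt k T \<Gamma> \<and> length \<Gamma> = 1 \<and> (\<forall>c \<in> set \<Gamma>. det_node c)"

definition pb_measure :: "(nat list \<Rightarrow> nat) \<Rightarrow> bool" where
  "pb_measure \<psi> \<longleftrightarrow>
     (\<forall>a. \<psi> a = 0 \<longleftrightarrow> a = []) \<and>
     (\<forall>a b. mset a = mset b \<longrightarrow> \<psi> a = \<psi> b) \<and>
     (\<forall>a b. \<psi> a \<le> \<psi> (a @ b)) \<and>
     (\<forall>a b. \<psi> (a @ b) \<le> \<psi> a + \<psi> b)"

definition bounded_measure :: "(nat list \<Rightarrow> nat) \<Rightarrow> bool" where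
  "bounded_measure \<psi> \<longleftrightarrow> pb_measure \<psi> \<and> (\<forall>a. length a \<le> \<psi> a)"

definition psi_word :: "(nat list \<Rightarrow> nat) \<Rightarrow> (nat \<times> nat) list \<Rightarrow> nat" where
  "psi_word \<psi> \<alpha> = \<psi> (map fst \<alpha>)"

definition psi_tree :: "(nat list \<Rightarrow> nat) \<Rightarrow> dtree \<Rightarrow> nat" where
  "psi_tree \<psi> \<Gamma> = Max {psi_word \<psi> \<alpha> | \<alpha> d. cpath \<Gamma> \<alpha> d}"

definition psi_d :: "(nat list \<Rightarrow> nat) \<Rightarrow> nat \<Rightarrow> dtable \<Rightarrow> nat" where
  "psi_d \<psi> k T = (if snd T = [] then 0 else Inf {psi_tree \<psi> \<Gamma> | \<Gamma>. is_dt k T \<Gamma>})"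

definition psi_a :: "(nat list \<Rightarrow> nat) \<Rightarrow> nat \<Rightarrow> dtable \<Rightarrow> nat" where
  "psi_a \<psi> k T = (if snd T = [] then 0 else Inf {psi_tree \<psi> \<Gamma> | \<Gamma>. is_ndt k T \<Gamma>})"

definition is_cover :: "(nat list \<Rightarrow> nat) \<Rightarrow> nat \<Rightarrow> dtable \<Rightarrow> nat \<Rightarrow> (nat \<times> nat) list set \<Rightarrow> bool" where
  "is_cover \<psi> k T n U \<longleftrightarrow> finite U \<and> U \<subseteq> {\<alpha> \<in> Omega k T. psi_word \<psi> \<alpha> \<le> n} \<and>
     (\<Union>\<alpha> \<in> U. set (sub T \<alpha>)) = Delta T"

definition irr_cover :: "(nat list \<Rightarrow> nat) \<Rightarrow> nat \<Rightarrow> dtable \<Rightarrow> nat \<Rightarrow> (nat \<times> nat) list set \<Rightarrow> bool" where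
  "irr_cover \<psi> k T n U \<longleftrightarrow> is_cover \<psi> k T n U \<and> (\<forall>V. V \<subset> U \<longrightarrow> \<not> is_cover \<psi> k T n V)"

definition l_psi :: "(nat list \<Rightarrow> nat) \<Rightarrow> nat \<Rightarrow> dtable \<Rightarrow> nat \<Rightarrow> nat" where
  "l_psi \<psi> k T n = (if snd T = [] then 0 else Max {card U | U. irr_cover \<psi> k T n U})"

text \<open>Partial functions: None = undefined.\<close>
definition L_fun :: "(nat list \<Rightarrow> nat) \<Rightarrow> nat \<Rightarrow> dtable set \<Rightarrow> nat \<Rightarrow> nat option" where
  "L_fun \<psi> k A n = (let S = {l_psi \<psi> k T n | T. T \<in> A} in
     if finite S then Some (Max S) else None)"

definition H_fun :: "(nat list \<Rightarrow> nat) \<Rightarrow> nat \<Rightarrow> dtable set \<Rightarrow> nat \<Rightarrow> nat option" where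
  "H_fun \<psi> k A n = (let S = {psi_d \<psi> k T | T. T \<in> A \<and> psi_a \<psi> k T \<le> n} in
     if finite S then Some (Max S) else None)"

end

theory Submission
  imports Defs
begin

text \<open>Upper bound: a nondeterministic tree of complexity at most n for T yields a
(psi, n)-cover of T by its paths; an irreducible subcover has at most L(n) words, and querying
all attributes of these words gives a deterministic tree of complexity at most L(n) * n.
So psi_d is bounded on the tables T of A with psi_a(T) <= n, and H(n) is defined.

Lower bound: take T in A with an irreducible cover u_0, ..., u_(l-1), l = L(n), and label
every row with the set of indices of the words it satisfies. The relabelled table lies in A
by closedness and still has a nondeterministic tree of complexity at most n (one branch per
word). By irreducibility each u_j has a row satisfying no other word, now labelled {j}; so
every deterministic tree must output all l labels, while a tree of complexity h has at most
k^h leaves because psi is bounded.\<close>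

section \<open>Paths of decision trees\<close>

lemma npath_Leaf_iff: "npath (Leaf d) \<alpha> e \<longleftrightarrow> \<alpha> = [] \<and> e = d"
  by (auto elim: npath.cases intro: npath.intros)

lemma npath_Node_iff:
  "npath (Node f cs) \<alpha> e \<longleftrightarrow> (\<exists>p\<in>set cs. \<exists>\<beta>. \<alpha> = (f, fst p) # \<beta> \<and> npath (snd p) \<beta> e)"
  by (rule iffI, erule npath.cases, auto intro: npath.intros)

lemma npaths_Node_eq:
  "{(\<alpha>, d). npath (Node f cs) \<alpha> d} =
     (\<Union>p\<in>set cs. (\<lambda>(\<alpha>, d). ((f, fst p) # \<alpha>, d)) ` {(\<alpha>, d). npath (snd p) \<alpha> d})"
  by (auto simp: npath_Node_iff)

lemma finite_npaths: "finite {(\<alpha>, d). npath c \<alpha> d}"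
proof (induction c)
  case (Leaf d)
  then show ?case by (simp add: npath_Leaf_iff)
next
  case (Node f cs)
  then show ?case
    unfolding npaths_Node_eq by (metis (no_types, lifting) finite_UN_I finite_imageI
        finite_set snds.intros)
qed

lemma npath_exists: "wf_node k c \<Longrightarrow> \<exists>\<alpha> d. npath c \<alpha> d"
proof (induction c)
  case (Leaf d)
  then show ?case by (auto simp: npath_Leaf_iff)
next
  case (Node f cs)
  then obtain p where p: "p \<in> set cs" by (cases cs) auto
  with Node have "\<exists>\<alpha> d. npath (snd p) \<alpha> d"
    by (metis snds.intros wf_node.simps(2))
  with p show ?case by (auto simp: npath_Node_iff)
qed

lemma npath_letters: "npath c \<alpha> d \<Longrightarrow> wf_node k c \<Longrightarrow> \<forall>p\<in>set \<alpha>. att_of (fst p) c \<and> snd p < k"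
  by (induction rule: npath.induct) (auto intro: att_of.intros)

lemma card_npaths_le:
  assumes "k > 0" "wf_node k c" "det_node c" "\<forall>\<alpha> d. npath c \<alpha> d \<longrightarrow> length \<alpha> \<le> h"
  shows "card {(\<alpha>, d). npath c \<alpha> d} \<le> k ^ h"
  using assms(2-)
proof (induction c arbitrary: h)
  case (Leaf d)
  have "{(\<alpha>, e). npath (Leaf d) \<alpha> e} = {([], d)}" by (auto simp: npath_Leaf_iff)
  then show ?case using assms(1) by simp
next
  case (Node f cs)
  show ?case
  proof (cases h)
    case 0
    then have "{(\<alpha>, d). npath (Node f cs) \<alpha> d} = {}"
      using Node.prems(3) by (auto simp: npath_Node_iff)
    then show ?thesis by simp
  next
    case (Suc h')
    have child: "card {(\<alpha>, d). npath (snd p) \<alpha> d} \<le> k ^ h'" if p: "p \<in> set cs" for p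
    proof -
      have "wf_node k (snd p)" "det_node (snd p)" using Node.prems p by auto
      moreover have "\<forall>\<alpha> d. npath (snd p) \<alpha> d \<longrightarrow> length \<alpha> \<le> h'"
        using Node.prems(3) p Suc by (fastforce simp: npath_Node_iff)
      ultimately show ?thesis using Node.IH[of p "snd p" h'] p
        by (metis snds.intros)
    qed
    have branching: "card (set cs) \<le> k"
    proof -
      have "card (set cs) = card (fst ` set cs)"
        using Node.prems by (simp add: card_image distinct_map)
      also have "\<dots> \<le> card {..<k}"
        by (rule card_mono) (use Node.prems in auto)
      finally show ?thesis by simp
    qed
    have "card {(\<alpha>, d). npath (Node f cs) \<alpha> d}
        \<le> (\<Sum>p\<in>set cs. card ((\<lambda>(\<alpha>, d). ((f, fst p) # \<alpha>, d)) ` {(\<alpha>, d). npath (snd p) \<alpha> d}))"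
      unfolding npaths_Node_eq by (rule card_UN_le) simp
    also have "\<dots> \<le> (\<Sum>p\<in>set cs. k ^ h')"
      by (rule sum_mono) (meson card_image_le child finite_npaths order_trans)
    also have "\<dots> \<le> k * k ^ h'" using branching by simp
    also have "\<dots> = k ^ h" using Suc by simp
    finally show ?thesis .
  qed
qed

lemma finite_cpaths: "finite {(\<alpha>, d). cpath \<Gamma> \<alpha> d}"
proof -
  have "{(\<alpha>, d). cpath \<Gamma> \<alpha> d} = (\<Union>c\<in>set \<Gamma>. {(\<alpha>, d). npath c \<alpha> d})"
    by (auto simp: cpath_def)
  then show ?thesis using finite_npaths by simp
qed

lemma psi_tree_eq_Max:
  "psi_tree \<psi> \<Gamma> = Max ((\<lambda>(\<alpha>, d). psi_word \<psi> \<alpha>) ` {(\<alpha>, d). cpath \<Gamma> \<alpha> d})"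
  unfolding psi_tree_def by (rule arg_cong[where f = Max]) auto

lemma psi_word_le_psi_tree: "cpath \<Gamma> \<alpha> d \<Longrightarrow> psi_word \<psi> \<alpha> \<le> psi_tree \<psi> \<Gamma>"
  unfolding psi_tree_eq_Max by (rule Max_ge) (use finite_cpaths in auto)

lemma psi_tree_le:
  assumes "ktree k \<Gamma>" "\<And>\<alpha> d. cpath \<Gamma> \<alpha> d \<Longrightarrow> psi_word \<psi> \<alpha> \<le> b"
  shows "psi_tree \<psi> \<Gamma> \<le> b"
proof -
  obtain c where c: "c \<in> set \<Gamma>" "wf_node k c"
    using assms(1) unfolding ktree_def by (cases \<Gamma>) auto
  then obtain \<alpha> d where "npath c \<alpha> d" using npath_exists by blast
  then have "{(\<alpha>, d). cpath \<Gamma> \<alpha> d} \<noteq> {}" using c by (auto simp: cpath_def)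
  then show ?thesis unfolding psi_tree_eq_Max
    by (subst Max_le_iff) (use finite_cpaths assms(2) in auto)
qed

lemma cpath_in_Omega:
  assumes "is_ndt k T \<Gamma>" "cpath \<Gamma> \<alpha> d"
  shows "\<alpha> \<in> Omega k T"
proof -
  obtain c where c: "c \<in> set \<Gamma>" "npath c \<alpha> d" using assms(2) unfolding cpath_def by blast
  have "wf_node k c" using assms(1) c(1) unfolding is_ndt_def ktree_def by blast
  then have "\<forall>p\<in>set \<alpha>. att_of (fst p) c \<and> snd p < k" using npath_letters c(2) by blast
  then show ?thesis using assms(1) c(1) unfolding is_ndt_def Omega_def At_tree_def by blast
qed

lemma psi_d_le:
  assumes "is_dt k T \<Gamma>"
  shows "psi_d \<psi> k T \<le> psi_tree \<psi> \<Gamma>"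
proof -
  have "psi_tree \<psi> \<Gamma> \<in> {psi_tree \<psi> \<Gamma> | \<Gamma>. is_dt k T \<Gamma>}" using assms by blast
  then show ?thesis unfolding psi_d_def by (simp add: wellorder_Inf_le1)
qed

lemma psi_a_le:
  assumes "is_ndt k T \<Gamma>"
  shows "psi_a \<psi> k T \<le> psi_tree \<psi> \<Gamma>"
proof -
  have "psi_tree \<psi> \<Gamma> \<in> {psi_tree \<psi> \<Gamma> | \<Gamma>. is_ndt k T \<Gamma>}" using assms by blast
  then show ?thesis unfolding psi_a_def by (simp add: wellorder_Inf_le1)
qed


section \<open>Tree constructions\<close>

fun query_tree :: "nat \<Rightarrow> ((nat \<times> nat) list \<Rightarrow> nat) \<Rightarrow> nat list \<Rightarrow> (nat \<times> nat) list \<Rightarrow> dnode" where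
  "query_tree k g [] acc = Leaf (g acc)"
| "query_tree k g (f # fs) acc =
     Node f (map (\<lambda>v. (v, query_tree k g fs (acc @ [(f, v)]))) [0..<k])"

lemma npath_query_tree_iff:
  "npath (query_tree k g B acc) \<beta> d \<longleftrightarrow>
     (\<exists>vs. length vs = length B \<and> (\<forall>v\<in>set vs. v < k) \<and> \<beta> = zip B vs \<and> d = g (acc @ zip B vs))"
proof (induction B arbitrary: acc \<beta>)
  case Nil
  then show ?case by (auto simp: npath_Leaf_iff)
next
  case (Cons f fs)
  have "npath (query_tree k g (f # fs) acc) \<beta> d \<longleftrightarrow>
      (\<exists>v<k. \<exists>\<beta>'. \<beta> = (f, v) # \<beta>' \<and> npath (query_tree k g fs (acc @ [(f, v)])) \<beta>' d)"
    by (auto simp: npath_Node_iff)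
  also have "\<dots> \<longleftrightarrow> (\<exists>v<k. \<exists>vs. length vs = length fs \<and> (\<forall>v\<in>set vs. v < k) \<and>
      \<beta> = zip (f # fs) (v # vs) \<and> d = g (acc @ zip (f # fs) (v # vs)))"
    by (auto simp: Cons.IH)
  also have "\<dots> \<longleftrightarrow> (\<exists>vs. length vs = length (f # fs) \<and> (\<forall>v\<in>set vs. v < k) \<and>
      \<beta> = zip (f # fs) vs \<and> d = g (acc @ zip (f # fs) vs))"
    (is "?L \<longleftrightarrow> ?R")
  proof
    assume ?L
    then obtain v vs where "v < k" "length vs = length fs" "\<forall>v\<in>set vs. v < k"
      "\<beta> = zip (f # fs) (v # vs)" "d = g (acc @ zip (f # fs) (v # vs))" by blast
    then show ?R by (intro exI[of _ "v # vs"]) auto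
  qed (fastforce simp: length_Suc_conv)
  finally show ?case .
qed

lemma wf_query_tree: "k > 0 \<Longrightarrow> wf_node k (query_tree k g B acc)"
  by (induction B arbitrary: acc) auto

lemma det_query_tree: "det_node (query_tree k g B acc)"
  by (induction B arbitrary: acc) (auto simp: comp_def)

lemma att_of_query_tree: "att_of f (query_tree k g B acc) \<Longrightarrow> f \<in> set B"
proof (induction B arbitrary: acc)
  case Nil
  then show ?case by (auto elim: att_of.cases)
next
  case (Cons a B)
  from Cons.prems show ?case
    by (cases rule: att_of.cases) (auto dest: Cons.IH)
qed

fun word_tree :: "(nat \<times> nat) list \<Rightarrow> nat \<Rightarrow> dnode" where
  "word_tree [] d = Leaf d"
| "word_tree (p # \<alpha>) d = Node (fst p) [(snd p, word_tree \<alpha> d)]"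

lemma npath_word_tree_iff: "npath (word_tree \<alpha> d) \<beta> e \<longleftrightarrow> \<beta> = \<alpha> \<and> e = d"
  by (induction \<alpha> arbitrary: \<beta>) (auto simp: npath_Leaf_iff npath_Node_iff)

lemma wf_word_tree: "\<forall>p\<in>set \<alpha>. snd p < k \<Longrightarrow> wf_node k (word_tree \<alpha> d)"
  by (induction \<alpha>) auto

lemma att_of_word_tree: "att_of f (word_tree \<alpha> d) \<Longrightarrow> f \<in> fst ` set \<alpha>"
proof (induction \<alpha>)
  case Nil
  then show ?case by (auto elim: att_of.cases)
next
  case (Cons p \<alpha>)
  from Cons.prems show ?case
    by (cases rule: att_of.cases) (auto dest: Cons.IH)
qed

lemma psi_concat_le_sum:
  assumes "pb_measure \<psi>"
  shows "\<psi> (concat (map (map fst) ws)) \<le> (\<Sum>w\<leftarrow>ws. psi_word \<psi> w)"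
proof (induction ws)
  case Nil
  have "\<psi> [] = 0" using assms unfolding pb_measure_def by blast
  then show ?case by simp
next
  case (Cons w ws)
  have "\<psi> (map fst w @ concat (map (map fst) ws)) \<le> \<psi> (map fst w) + \<psi> (concat (map (map fst) ws))"
    using assms unfolding pb_measure_def by blast
  then show ?case using Cons by (simp add: psi_word_def)
qed

lemma psi_remdups_le:
  assumes "pb_measure \<psi>"
  shows "\<psi> (remdups xs) \<le> \<psi> xs"
proof -
  obtain ys where "mset xs = mset (remdups xs @ ys)"
    by (metis ex_mset mset_append mset_remdups_subset_eq subset_mset.add_diff_inverse)
  moreover have "\<psi> (remdups xs) \<le> \<psi> (remdups xs @ ys)" using assms unfolding pb_measure_def by blast
  ultimately show ?thesis using assms unfolding pb_measure_def by metis
qed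

lemma exists_answers_sat:
  assumes wf: "wf_table k T" and rd: "rd \<in> set (snd T)" and B: "set B \<subseteq> At T"
  shows "\<exists>vs. length vs = length B \<and> (\<forall>v\<in>set vs. v < k) \<and> sat T (zip B vs) (fst rd)"
proof -
  have "\<forall>f\<in>set B. \<exists>i. i < length (fst T) \<and> fst T ! i = f"
    using B by (auto simp: At_def in_set_conv_nth)
  then obtain ix where ix: "\<forall>f\<in>set B. ix f < length (fst T) \<and> fst T ! ix f = f"
    by metis
  have row: "length (fst rd) = length (fst T)" "\<forall>v\<in>set (fst rd). v < k"
    using wf rd unfolding wf_table_def by auto
  show ?thesis
  proof (intro exI conjI)
    show "length (map (\<lambda>f. fst rd ! ix f) B) = length B" by simp
    show "\<forall>v\<in>set (map (\<lambda>f. fst rd ! ix f) B). v < k"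
      using ix row by auto
    show "sat T (zip B (map (\<lambda>f. fst rd ! ix f) B)) (fst rd)"
      using ix by (auto simp: sat_def zip_map2 zip_same_conv_map)
  qed
qed

lemma sat_subset_answers:
  assumes dist: "distinct (fst T)" and len: "length vs = length B"
    and sat_ans: "sat T (zip B vs) r" and sat_w: "sat T w r" and w: "fst ` set w \<subseteq> set B"
  shows "set w \<subseteq> set (zip B vs)"
proof
  fix p assume p: "p \<in> set w"
  then obtain i where i: "i < length (fst T)" "fst T ! i = fst p" "r ! i = snd p"
    using sat_w unfolding sat_def by blast
  obtain j where j: "j < length B" "B ! j = fst p" using w p by (force simp: in_set_conv_nth)
  have pj: "(B ! j, vs ! j) \<in> set (zip B vs)" using j len by (auto simp: in_set_conv_nth)
  then obtain i' where i': "i' < length (fst T)" "fst T ! i' = B ! j" "r ! i' = vs ! j"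
    using sat_ans unfolding sat_def by fastforce
  have "i = i'" using i i' j dist by (metis nth_eq_iff_index_eq)
  then have "p = (B ! j, vs ! j)" using i i' j by (simp add: prod_eq_iff)
  then show "p \<in> set (zip B vs)" using pj by simp
qed

lemma sub_antimono: "set w \<subseteq> set \<alpha> \<Longrightarrow> set (sub T \<alpha>) \<subseteq> set (sub T w)"
  by (auto simp: sub_def sat_def)

lemma Pi_rows_antimono: "set xs \<subseteq> set ys \<Longrightarrow> Pi_rows ys \<subseteq> Pi_rows xs"
  by (auto simp: Pi_rows_def)

definition cover_decision :: "dtable \<Rightarrow> (nat \<times> nat) list list \<Rightarrow> (nat \<times> nat) list \<Rightarrow> nat" where
  "cover_decision T ws \<alpha> = (case find (\<lambda>w. set w \<subseteq> set \<alpha>) ws of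
     Some w \<Rightarrow> (SOME d. d \<in> Pi_rows (sub T w)) | None \<Rightarrow> 0)"

text \<open>The answers zip B vs fix all attributes of B, so every word of ws satisfied by a row of the
  subtable is contained in zip B vs, and the decision of the first word found is common.\<close>

lemma cover_decision_in_Pi_rows:
  assumes wf: "wf_table k T"
    and cov: "\<forall>rd\<in>Delta T. \<exists>w\<in>set ws. rd \<in> set (sub T w)"
    and dec: "\<forall>w\<in>set ws. Pi_rows (sub T w) \<noteq> {}"
    and B: "\<forall>w\<in>set ws. fst ` set w \<subseteq> set B" and len: "length vs = length B"
    and ne: "sub T (zip B vs) \<noteq> []"
  shows "cover_decision T ws (zip B vs) \<in> Pi_rows (sub T (zip B vs))"
proof -
  obtain rd where rd: "rd \<in> set (sub T (zip B vs))" using ne hd_in_set by blast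
  then have "rd \<in> Delta T" by (simp add: sub_def Delta_def)
  then obtain w where w: "w \<in> set ws" "rd \<in> set (sub T w)" using cov by blast
  have "distinct (fst T)" using wf by (simp add: wf_table_def)
  moreover have "sat T (zip B vs) (fst rd)" "sat T w (fst rd)"
    using rd w(2) by (simp_all add: sub_def)
  ultimately have "set w \<subseteq> set (zip B vs)" using sat_subset_answers[OF _ len] B w(1) by blast
  then have "find (\<lambda>w. set w \<subseteq> set (zip B vs)) ws \<noteq> None"
    using w(1) by (auto simp: find_None_iff)
  then obtain w' where w': "find (\<lambda>w. set w \<subseteq> set (zip B vs)) ws = Some w'" by blast
  then have "w' \<in> set ws" "set w' \<subseteq> set (zip B vs)" by (auto simp: find_Some_iff in_set_conv_nth)
  moreover have "cover_decision T ws (zip B vs) \<in> Pi_rows (sub T w')"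
    using w' dec \<open>w' \<in> set ws\<close> by (simp add: cover_decision_def some_in_eq)
  ultimately show ?thesis using sub_antimono Pi_rows_antimono by blast
qed

lemma exists_dt_from_cover:
  assumes k: "k \<ge> 1" and wf: "wf_table k T" and psi: "pb_measure \<psi>"
    and ws: "set ws \<subseteq> Omega k T"
    and cov: "\<forall>rd\<in>Delta T. \<exists>w\<in>set ws. rd \<in> set (sub T w)"
    and dec: "\<forall>w\<in>set ws. Pi_rows (sub T w) \<noteq> {}"
  shows "\<exists>\<Gamma>. is_dt k T \<Gamma> \<and> psi_tree \<psi> \<Gamma> \<le> (\<Sum>w\<leftarrow>ws. psi_word \<psi> w)"
proof -
  define B where "B = remdups (concat (map (map fst) ws))"
  define \<Gamma> where "\<Gamma> = [query_tree k (cover_decision T ws) B []]"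
  have cpath_iff: "cpath \<Gamma> \<beta> d \<longleftrightarrow> (\<exists>vs. length vs = length B \<and> (\<forall>v\<in>set vs. v < k) \<and>
      \<beta> = zip B vs \<and> d = cover_decision T ws (zip B vs))"
    for \<beta> d unfolding \<Gamma>_def cpath_def by (simp add: npath_query_tree_iff)
  have B: "set B \<subseteq> At T" using ws unfolding B_def Omega_def by auto
  have tree: "ktree k \<Gamma>" using k wf_query_tree unfolding \<Gamma>_def ktree_def by auto
  have covers: "\<exists>\<alpha> d. cpath \<Gamma> \<alpha> d \<and> rd \<in> set (sub T \<alpha>)" if "rd \<in> Delta T" for rd
  proof -
    have rd: "rd \<in> set (snd T)" using that by (simp add: Delta_def)
    then obtain vs where vs: "length vs = length B" "\<forall>v\<in>set vs. v < k" "sat T (zip B vs) (fst rd)"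
      using exists_answers_sat[OF wf rd B] by blast
    then have "cpath \<Gamma> (zip B vs) (cover_decision T ws (zip B vs))" by (auto simp: cpath_iff)
    moreover have "rd \<in> set (sub T (zip B vs))" using rd vs(3) by (simp add: sub_def)
    ultimately show ?thesis by blast
  qed
  have "\<forall>w\<in>set ws. fst ` set w \<subseteq> set B" by (force simp: B_def)
  then have correct: "d \<in> Pi_rows (sub T \<alpha>)" if "cpath \<Gamma> \<alpha> d" "sub T \<alpha> \<noteq> []" for \<alpha> d
    using that cover_decision_in_Pi_rows[OF wf cov dec] unfolding cpath_iff by blast
  have "is_dt k T \<Gamma>"
    unfolding is_dt_def is_ndt_def using tree covers correct B det_query_tree att_of_query_tree
    by (auto simp: \<Gamma>_def At_tree_def)
  moreover have "psi_tree \<psi> \<Gamma> \<le> \<psi> (concat (map (map fst) ws))"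
  proof (rule psi_tree_le[OF tree])
    fix \<alpha> d assume "cpath \<Gamma> \<alpha> d"
    then have "map fst \<alpha> = B" using cpath_iff by auto
    then show "psi_word \<psi> \<alpha> \<le> \<psi> (concat (map (map fst) ws))"
      using psi_remdups_le[OF psi] by (simp add: psi_word_def B_def)
  qed
  ultimately show ?thesis using psi_concat_le_sum[OF psi] order_trans by blast
qed

section \<open>Covers and the upper bound\<close>

lemma sub_row_word:
  assumes wf: "wf_table k T" and rd: "rd \<in> set (snd T)"
  shows "set (sub T (zip (fst T) (fst rd))) = {rd}"
proof -
  have dist: "distinct (fst T)" and keys: "distinct (map fst (snd T))"
    and len: "\<forall>rd\<in>set (snd T). length (fst rd) = length (fst T)"
    using wf unfolding wf_table_def by auto
  have "fst rd' = fst rd" if rd': "rd' \<in> set (snd T)" "sat T (zip (fst T) (fst rd)) (fst rd')" for rd'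
  proof (rule nth_equalityI)
    show "length (fst rd') = length (fst rd)" using len rd rd'(1) by simp
    fix i assume "i < length (fst rd')"
    then have i: "i < length (fst T)" using len rd'(1) by simp
    then have "(fst T ! i, fst rd ! i) \<in> set (zip (fst T) (fst rd))"
      using len rd by (auto simp: set_zip)
    then obtain i' where "i' < length (fst T)" "fst T ! i' = fst T ! i" "fst rd' ! i' = fst rd ! i"
      using rd'(2) unfolding sat_def by fastforce
    then show "fst rd' ! i = fst rd ! i" using i dist by (metis nth_eq_iff_index_eq)
  qed
  then have "rd' = rd" if "rd' \<in> set (sub T (zip (fst T) (fst rd)))" for rd'
    using that rd keys by (metis (no_types, lifting) eq_key_imp_eq_value mem_Collect_eq
        prod.collapse set_filter sub_def)
  moreover have "sat T (zip (fst T) (fst rd)) (fst rd)"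
    using len rd unfolding sat_def by (auto simp: set_zip)
  ultimately show ?thesis using rd by (auto simp: sub_def)
qed

lemma exists_dt:
  assumes k: "k \<ge> 1" and wf: "wf_table k T" and psi: "pb_measure \<psi>"
  shows "\<exists>\<Gamma>. is_dt k T \<Gamma>"
proof -
  define ws where "ws = map (\<lambda>rd. zip (fst T) (fst rd)) (snd T)"
  have rows: "\<forall>rd\<in>set (snd T). (\<forall>v\<in>set (fst rd). v < k) \<and> snd rd \<noteq> {}"
    using wf unfolding wf_table_def by auto
  have "set ws \<subseteq> Omega k T"
    using rows unfolding ws_def Omega_def At_def by (auto dest: set_zip_leftD set_zip_rightD)
  moreover have "\<forall>rd\<in>Delta T. \<exists>w\<in>set ws. rd \<in> set (sub T w)"
    using sub_row_word[OF wf] unfolding ws_def Delta_def by auto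
  moreover have "\<forall>w\<in>set ws. Pi_rows (sub T w) \<noteq> {}"
    using sub_row_word[OF wf] rows unfolding ws_def Pi_rows_def by auto
  ultimately show ?thesis using exists_dt_from_cover[OF k wf psi] by blast
qed

lemma psi_d_attained:
  assumes "k \<ge> 1" "wf_table k T" "pb_measure \<psi>" "snd T \<noteq> []"
  shows "\<exists>\<Gamma>. is_dt k T \<Gamma> \<and> psi_tree \<psi> \<Gamma> = psi_d \<psi> k T"
proof -
  have "{psi_tree \<psi> \<Gamma> | \<Gamma>. is_dt k T \<Gamma>} \<noteq> {}" using exists_dt[OF assms(1-3)] by blast
  then have "Inf {psi_tree \<psi> \<Gamma> | \<Gamma>. is_dt k T \<Gamma>} \<in> {psi_tree \<psi> \<Gamma> | \<Gamma>. is_dt k T \<Gamma>}"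
    by (rule Inf_nat_def1)
  moreover have "psi_d \<psi> k T = Inf {psi_tree \<psi> \<Gamma> | \<Gamma>. is_dt k T \<Gamma>}"
    using assms(4) by (simp add: psi_d_def)
  ultimately show ?thesis by force
qed

lemma psi_a_attained:
  assumes "k \<ge> 1" "wf_table k T" "pb_measure \<psi>" "snd T \<noteq> []"
  shows "\<exists>\<Gamma>. is_ndt k T \<Gamma> \<and> psi_tree \<psi> \<Gamma> = psi_a \<psi> k T"
proof -
  have "{psi_tree \<psi> \<Gamma> | \<Gamma>. is_ndt k T \<Gamma>} \<noteq> {}"
    using exists_dt[OF assms(1-3)] unfolding is_dt_def by blast
  then have "Inf {psi_tree \<psi> \<Gamma> | \<Gamma>. is_ndt k T \<Gamma>} \<in> {psi_tree \<psi> \<Gamma> | \<Gamma>. is_ndt k T \<Gamma>}"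
    by (rule Inf_nat_def1)
  moreover have "psi_a \<psi> k T = Inf {psi_tree \<psi> \<Gamma> | \<Gamma>. is_ndt k T \<Gamma>}"
    using assms(4) by (simp add: psi_a_def)
  ultimately show ?thesis by force
qed

lemma finite_Omega_psi_le:
  assumes "bounded_measure \<psi>"
  shows "finite {\<alpha> \<in> Omega k T. psi_word \<psi> \<alpha> \<le> n}"
proof -
  have "{\<alpha> \<in> Omega k T. psi_word \<psi> \<alpha> \<le> n} \<subseteq> {xs. set xs \<subseteq> At T \<times> {..<k} \<and> length xs \<le> n}"
  proof
    fix \<alpha> assume \<alpha>: "\<alpha> \<in> {\<alpha> \<in> Omega k T. psi_word \<psi> \<alpha> \<le> n}"
    have "length (map fst \<alpha>) \<le> \<psi> (map fst \<alpha>)" using assms unfolding bounded_measure_def by blast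
    then have "length \<alpha> \<le> n" using \<alpha> by (simp add: psi_word_def)
    moreover have "set \<alpha> \<subseteq> At T \<times> {..<k}" using \<alpha> unfolding Omega_def by force
    ultimately show "\<alpha> \<in> {xs. set xs \<subseteq> At T \<times> {..<k} \<and> length xs \<le> n}" by simp
  qed
  moreover have "finite (At T \<times> {..<k})" by (simp add: At_def)
  ultimately show ?thesis using finite_lists_length_le finite_subset by blast
qed

lemma exists_irr_subcover:
  assumes "is_cover \<psi> k T n U"
  shows "\<exists>V\<subseteq>U. irr_cover \<psi> k T n V"
proof -
  obtain V where V: "V \<subseteq> U" "is_cover \<psi> k T n V"
    and least: "\<forall>W. W \<subseteq> U \<and> is_cover \<psi> k T n W \<longrightarrow> card V \<le> card W"
    using ex_has_least_nat[of "\<lambda>V. V \<subseteq> U \<and> is_cover \<psi> k T n V" U card] assms by blast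
  have "\<not> is_cover \<psi> k T n W" if W: "W \<subset> V" for W
  proof
    assume "is_cover \<psi> k T n W"
    then have "card V \<le> card W" using least W V(1) by blast
    moreover have "card W < card V"
      using W V(2) psubset_card_mono by (auto simp: is_cover_def)
    ultimately show False by simp
  qed
  then show ?thesis using V unfolding irr_cover_def by blast
qed

lemma finite_irr_covers:
  assumes "bounded_measure \<psi>"
  shows "finite {U. irr_cover \<psi> k T n U}"
proof -
  have "{U. irr_cover \<psi> k T n U} \<subseteq> Pow {\<alpha> \<in> Omega k T. psi_word \<psi> \<alpha> \<le> n}"
    unfolding irr_cover_def is_cover_def by auto
  then show ?thesis using finite_Omega_psi_le[OF assms] finite_subset by blast
qed

lemma card_le_l_psi:
  assumes b: "bounded_measure \<psi>" and ne: "snd T \<noteq> []" and V: "irr_cover \<psi> k T n V"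
  shows "card V \<le> l_psi \<psi> k T n"
proof -
  have "finite {card U | U. irr_cover \<psi> k T n U}"
    using finite_irr_covers[OF b] by (simp add: setcompr_eq_image)
  moreover have "card V \<in> {card U | U. irr_cover \<psi> k T n U}" using V by blast
  ultimately have "card V \<le> Max {card U | U. irr_cover \<psi> k T n U}" by (rule Max_ge)
  then show ?thesis using ne by (simp add: l_psi_def)
qed

lemma l_psi_attained:
  assumes b: "bounded_measure \<psi>" and ne: "snd T \<noteq> []"
  shows "\<exists>U. irr_cover \<psi> k T n U \<and> card U = l_psi \<psi> k T n"
proof -
  let ?C = "{card U | U. irr_cover \<psi> k T n U}"
  have "finite ?C" using finite_irr_covers[OF b] by (simp add: setcompr_eq_image)
  moreover have "\<psi> [] = 0" using b unfolding bounded_measure_def pb_measure_def by blast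
  then have "is_cover \<psi> k T n {[]}"
    unfolding is_cover_def Omega_def psi_word_def Delta_def sub_def sat_def by simp
  then obtain V where "irr_cover \<psi> k T n V" using exists_irr_subcover by blast
  then have "?C \<noteq> {}" by blast
  ultimately have "Max ?C \<in> ?C" by (rule Max_in)
  then show ?thesis using ne unfolding l_psi_def by auto
qed

lemma cover_of_ndt:
  assumes ndt: "is_ndt k T \<Gamma>" and psi: "psi_tree \<psi> \<Gamma> \<le> n"
  shows "is_cover \<psi> k T n {\<alpha>. \<exists>d. cpath \<Gamma> \<alpha> d}"
  unfolding is_cover_def
proof (intro conjI)
  have "{\<alpha>. \<exists>d. cpath \<Gamma> \<alpha> d} = fst ` {(\<alpha>, d). cpath \<Gamma> \<alpha> d}"
    by (auto simp: image_iff)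
  then show "finite {\<alpha>. \<exists>d. cpath \<Gamma> \<alpha> d}" using finite_cpaths by simp
  show "{\<alpha>. \<exists>d. cpath \<Gamma> \<alpha> d} \<subseteq> {\<alpha> \<in> Omega k T. psi_word \<psi> \<alpha> \<le> n}"
    using cpath_in_Omega[OF ndt] psi_word_le_psi_tree[THEN order_trans, OF _ psi] by blast
  show "(\<Union>\<alpha>\<in>{\<alpha>. \<exists>d. cpath \<Gamma> \<alpha> d}. set (sub T \<alpha>)) = Delta T"
  proof
    show "(\<Union>\<alpha>\<in>{\<alpha>. \<exists>d. cpath \<Gamma> \<alpha> d}. set (sub T \<alpha>)) \<subseteq> Delta T"
      by (auto simp: sub_def Delta_def)
    show "Delta T \<subseteq> (\<Union>\<alpha>\<in>{\<alpha>. \<exists>d. cpath \<Gamma> \<alpha> d}. set (sub T \<alpha>))"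
      using ndt unfolding is_ndt_def by blast
  qed
qed

lemma psi_d_le_card_cover:
  assumes k: "k \<ge> 1" and wf: "wf_table k T" and psi: "pb_measure \<psi>"
    and V: "is_cover \<psi> k T n V" and dec: "\<forall>w\<in>V. Pi_rows (sub T w) \<noteq> {}"
  shows "psi_d \<psi> k T \<le> card V * n"
proof -
  have "finite V" using V unfolding is_cover_def by blast
  then obtain ws where ws: "set ws = V" "distinct ws" using finite_distinct_list by blast
  have "set ws \<subseteq> Omega k T" using V ws(1) unfolding is_cover_def by blast
  moreover have "\<forall>rd\<in>Delta T. \<exists>w\<in>set ws. rd \<in> set (sub T w)"
    using V ws(1) unfolding is_cover_def by blast
  ultimately
  obtain \<Gamma> where \<Gamma>: "is_dt k T \<Gamma>" "psi_tree \<psi> \<Gamma> \<le> (\<Sum>w\<leftarrow>ws. psi_word \<psi> w)"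
    using exists_dt_from_cover[OF k wf psi] dec ws(1) by blast
  have "psi_d \<psi> k T \<le> psi_tree \<psi> \<Gamma>" using \<Gamma>(1) by (rule psi_d_le)
  also have "\<dots> \<le> (\<Sum>w\<leftarrow>ws. psi_word \<psi> w)" by (rule \<Gamma>(2))
  also have "\<dots> \<le> (\<Sum>w\<leftarrow>ws. n)"
    by (rule sum_list_mono) (use V ws(1) in \<open>auto simp: is_cover_def\<close>)
  also have "\<dots> = card V * n" using distinct_card[OF ws(2)] ws(1) by (simp add: sum_list_triv)
  finally show ?thesis .
qed

lemma psi_d_le_l_psi_mult:
  assumes k: "k \<ge> 1" and wf: "wf_table k T" and b: "bounded_measure \<psi>"
    and a: "psi_a \<psi> k T \<le> n"
  shows "psi_d \<psi> k T \<le> l_psi \<psi> k T n * n"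
proof (cases "snd T = []")
  case True
  then show ?thesis by (simp add: psi_d_def)
next
  case ne: False
  have psi: "pb_measure \<psi>" using b by (simp add: bounded_measure_def)
  obtain \<Gamma> where \<Gamma>: "is_ndt k T \<Gamma>" "psi_tree \<psi> \<Gamma> \<le> n"
    using psi_a_attained[OF k wf psi ne] a by auto
  obtain V where V: "V \<subseteq> {\<alpha>. \<exists>d. cpath \<Gamma> \<alpha> d}" "irr_cover \<psi> k T n V"
    using exists_irr_subcover[OF cover_of_ndt[OF \<Gamma>]] by blast
  \<comment> \<open>Pi_rows [] = UNIV, so paths with empty subtables need no decision.\<close>
  have "Pi_rows (sub T w) \<noteq> {}" if w: "w \<in> V" for w
  proof -
    obtain d where "cpath \<Gamma> w d" using w V(1) by blast
    then have "sub T w = [] \<or> d \<in> Pi_rows (sub T w)" using \<Gamma>(1) unfolding is_ndt_def by blast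
    then show ?thesis by (auto simp: Pi_rows_def)
  qed
  moreover have "is_cover \<psi> k T n V" using V(2) by (simp add: irr_cover_def)
  ultimately have "psi_d \<psi> k T \<le> card V * n" using psi_d_le_card_cover[OF k wf psi] by blast
  also have "\<dots> \<le> l_psi \<psi> k T n * n" using card_le_l_psi[OF b ne V(2)] by simp
  finally show ?thesis .
qed


section \<open>Relabelling and the lower bound\<close>

lemma sat_J_op: "sat (J_op \<nu> T) = sat T"
  by (auto simp: sat_def J_op_def fun_eq_iff)

lemma sub_J_op: "set (sub (J_op \<nu> T) \<alpha>) = (\<lambda>rd. (fst rd, \<nu> (fst rd))) ` set (sub T \<alpha>)"
  unfolding sub_def sat_J_op by (auto simp: J_op_def)

lemma Delta_J_op: "Delta (J_op \<nu> T) = (\<lambda>rd. (fst rd, \<nu> (fst rd))) ` Delta T"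
  by (auto simp: Delta_def J_op_def)

lemma Omega_J_op: "Omega k (J_op \<nu> T) = Omega k T"
  by (simp add: Omega_def At_def J_op_def)

lemma wf_J_op:
  assumes "wf_table k T" "\<And>r. finite (\<nu> r) \<and> \<nu> r \<noteq> {}"
  shows "wf_table k (J_op \<nu> T)"
  using assms unfolding wf_table_def J_op_def by (auto simp: comp_def)

lemma cpath_word_trees_iff:
  "cpath (map (\<lambda>(w, d). word_tree w d) rules) \<alpha> d \<longleftrightarrow> (\<alpha>, d) \<in> set rules"
  by (auto simp: cpath_def npath_word_tree_iff intro!: bexI[of _ "(\<alpha>, d)"])

lemma is_ndt_word_trees:
  assumes ne: "rules \<noteq> []"
    and sound: "\<forall>(w, d)\<in>set rules. w \<in> Omega k T \<and> d \<in> Pi_rows (sub T w)"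
    and cov: "\<forall>rd\<in>Delta T. \<exists>(w, d)\<in>set rules. rd \<in> set (sub T w)"
  shows "is_ndt k T (map (\<lambda>(w, d). word_tree w d) rules)"
  unfolding is_ndt_def
proof (intro conjI)
  show "ktree k (map (\<lambda>(w, d). word_tree w d) rules)"
    using ne sound by (auto simp: ktree_def Omega_def intro!: wf_word_tree)
  show "At_tree (map (\<lambda>(w, d). word_tree w d) rules) \<subseteq> At T"
    using sound by (fastforce simp: At_tree_def Omega_def dest: att_of_word_tree)
  show "\<forall>rd\<in>Delta T. \<exists>\<alpha> d. cpath (map (\<lambda>(w, d). word_tree w d) rules) \<alpha> d \<and> rd \<in> set (sub T \<alpha>)"
    using cov unfolding cpath_word_trees_iff by blast
  show "\<forall>\<alpha> d. cpath (map (\<lambda>(w, d). word_tree w d) rules) \<alpha> d \<longrightarrow>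
      sub T \<alpha> = [] \<or> d \<in> Pi_rows (sub T \<alpha>)"
    using sound unfolding cpath_word_trees_iff by blast
qed

text \<open>The value {0} for tuples satisfying no word of us is a dummy: it only makes the
  labelling nonempty everywhere and is never attained on the rows of a table covered by us.\<close>

definition cover_labels :: "dtable \<Rightarrow> (nat \<times> nat) list list \<Rightarrow> nat list \<Rightarrow> nat set" where
  "cover_labels T us r =
     (if \<exists>j<length us. sat T (us ! j) r then {j. j < length us \<and> sat T (us ! j) r} else {0})"

lemma cover_labels_finite_nonempty: "finite (cover_labels T us r) \<and> cover_labels T us r \<noteq> {}"
  by (auto simp: cover_labels_def)

lemma psi_a_cover_labels_le:
  assumes U: "is_cover \<psi> k T n (set us)" and ne: "us \<noteq> []"
  shows "psi_a \<psi> k (J_op (cover_labels T us) T) \<le> n"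
proof -
  let ?T' = "J_op (cover_labels T us) T"
  define rules where "rules = zip us [0..<length us]"
  have rules: "(w, d) \<in> set rules \<longleftrightarrow> d < length us \<and> w = us ! d" for w d
    by (auto simp: rules_def set_zip)
  have words: "set us \<subseteq> {\<alpha> \<in> Omega k T. psi_word \<psi> \<alpha> \<le> n}" using U by (simp add: is_cover_def)
  have "is_ndt k ?T' (map (\<lambda>(w, d). word_tree w d) rules)"
  proof (rule is_ndt_word_trees)
    show "rules \<noteq> []" using ne by (simp add: rules_def)
    have "d \<in> Pi_rows (sub ?T' (us ! d))" if "d < length us" for d
      using that unfolding Pi_rows_def sub_J_op by (auto simp: sub_def cover_labels_def)
    then show "\<forall>(w, d)\<in>set rules. w \<in> Omega k ?T' \<and> d \<in> Pi_rows (sub ?T' w)"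
      using words nth_mem by (fastforce simp: rules Omega_J_op)
    show "\<forall>rd\<in>Delta ?T'. \<exists>(w, d)\<in>set rules. rd \<in> set (sub ?T' w)"
    proof
      fix rd' assume "rd' \<in> Delta ?T'"
      then obtain rd where rd: "rd \<in> Delta T" "rd' = (fst rd, cover_labels T us (fst rd))"
        by (auto simp: Delta_J_op)
      then obtain w where "w \<in> set us" "rd \<in> set (sub T w)" using U unfolding is_cover_def by blast
      then obtain j where "j < length us" "rd \<in> set (sub T (us ! j))" by (metis in_set_conv_nth)
      then have "(us ! j, j) \<in> set rules" "rd' \<in> set (sub ?T' (us ! j))"
        using rd(2) by (auto simp: rules sub_J_op)
      then show "\<exists>(w, d)\<in>set rules. rd' \<in> set (sub ?T' w)" by blast
    qed
  qed
  moreover have "psi_tree \<psi> (map (\<lambda>(w, d). word_tree w d) rules) \<le> n"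
  proof (rule psi_tree_le)
    show "ktree k (map (\<lambda>(w, d). word_tree w d) rules)"
      using calculation by (simp add: is_ndt_def)
    show "psi_word \<psi> \<alpha> \<le> n" if "cpath (map (\<lambda>(w, d). word_tree w d) rules) \<alpha> d" for \<alpha> d
      using that words nth_mem by (fastforce simp: cpath_word_trees_iff rules)
  qed
  ultimately show ?thesis using psi_a_le order_trans by blast
qed

lemma irr_cover_private_row:
  assumes U: "irr_cover \<psi> k T n U" and \<alpha>: "\<alpha> \<in> U"
  shows "\<exists>rd\<in>Delta T. \<forall>\<beta>\<in>U. rd \<in> set (sub T \<beta>) \<longleftrightarrow> \<beta> = \<alpha>"
proof -
  have cover: "is_cover \<psi> k T n U" and "\<not> is_cover \<psi> k T n (U - {\<alpha>})"
    using U \<alpha> unfolding irr_cover_def by blast+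
  then have "(\<Union>\<beta>\<in>U - {\<alpha>}. set (sub T \<beta>)) \<noteq> Delta T" unfolding is_cover_def by blast
  moreover have "(\<Union>\<beta>\<in>U - {\<alpha>}. set (sub T \<beta>)) \<subseteq> Delta T" by (auto simp: sub_def Delta_def)
  ultimately obtain rd where rd: "rd \<in> Delta T" "\<forall>\<beta>\<in>U - {\<alpha>}. rd \<notin> set (sub T \<beta>)" by blast
  moreover have "rd \<in> set (sub T \<alpha>)" using cover rd unfolding is_cover_def by blast
  ultimately show ?thesis by blast
qed

lemma cover_labels_output:
  assumes U: "irr_cover \<psi> k T n (set us)" and dist: "distinct us"
    and \<Gamma>: "is_ndt k (J_op (cover_labels T us) T) \<Gamma>" and j: "j < length us"
  shows "\<exists>\<alpha>. cpath \<Gamma> \<alpha> j"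
proof -
  obtain rd where rd: "rd \<in> Delta T" and only_j: "\<forall>\<beta>\<in>set us. rd \<in> set (sub T \<beta>) \<longleftrightarrow> \<beta> = us ! j"
    using irr_cover_private_row[OF U] j by (meson nth_mem)
  have "sat T (us ! i) (fst rd) \<longleftrightarrow> i = j" if "i < length us" for i
    using only_j that j rd dist by (auto simp: sub_def Delta_def nth_eq_iff_index_eq)
  then have "cover_labels T us (fst rd) = {j}" using j by (auto simp: cover_labels_def)
  then have "(fst rd, {j}) \<in> Delta (J_op (cover_labels T us) T)"
    using rd by (force simp: Delta_J_op)
  then obtain \<alpha> d where path: "cpath \<Gamma> \<alpha> d" and "(fst rd, {j}) \<in> set (sub (J_op (cover_labels T us) T) \<alpha>)"
    using \<Gamma> unfolding is_ndt_def by blast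
  moreover have "sub (J_op (cover_labels T us) T) \<alpha> = [] \<or> d \<in> Pi_rows (sub (J_op (cover_labels T us) T) \<alpha>)"
    using \<Gamma> path unfolding is_ndt_def by blast
  ultimately have "d = j" by (force simp: Pi_rows_def)
  then show ?thesis using path by blast
qed

lemma finite_cpath_decisions: "finite {d. \<exists>\<alpha>. cpath \<Gamma> \<alpha> d}"
proof -
  have "{d. \<exists>\<alpha>. cpath \<Gamma> \<alpha> d} = snd ` {(\<alpha>, d). cpath \<Gamma> \<alpha> d}" by (auto simp: image_iff)
  then show ?thesis using finite_cpaths by simp
qed

lemma card_dt_decisions_le:
  assumes k: "k > 0" and \<Gamma>: "is_dt k T \<Gamma>" and b: "bounded_measure \<psi>"
  shows "card {d. \<exists>\<alpha>. cpath \<Gamma> \<alpha> d} \<le> k ^ psi_tree \<psi> \<Gamma>"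
proof -
  obtain c where c: "\<Gamma> = [c]" using \<Gamma> unfolding is_dt_def by (cases \<Gamma>) auto
  have "wf_node k c" "det_node c" using \<Gamma> c unfolding is_dt_def is_ndt_def ktree_def by auto
  moreover have "\<forall>\<alpha> d. npath c \<alpha> d \<longrightarrow> length \<alpha> \<le> psi_tree \<psi> \<Gamma>"
  proof (intro allI impI)
    fix \<alpha> d assume "npath c \<alpha> d"
    then have "cpath \<Gamma> \<alpha> d" using c by (simp add: cpath_def)
    then have "psi_word \<psi> \<alpha> \<le> psi_tree \<psi> \<Gamma>" by (rule psi_word_le_psi_tree)
    moreover have "length (map fst \<alpha>) \<le> \<psi> (map fst \<alpha>)" using b unfolding bounded_measure_def by blast
    ultimately show "length \<alpha> \<le> psi_tree \<psi> \<Gamma>" by (simp add: psi_word_def)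
  qed
  ultimately have paths: "card {(\<alpha>, d). npath c \<alpha> d} \<le> k ^ psi_tree \<psi> \<Gamma>"
    using card_npaths_le[OF k] by blast
  have "{d. \<exists>\<alpha>. cpath \<Gamma> \<alpha> d} = snd ` {(\<alpha>, d). npath c \<alpha> d}"
    using c by (auto simp: cpath_def image_iff)
  then show ?thesis using paths card_image_le[OF finite_npaths] order_trans by metis
qed

lemma exists_relabelling_bounds:
  assumes k: "k \<ge> 2" and wf: "wf_table k T" and b: "bounded_measure \<psi>" and ne: "snd T \<noteq> []"
    and U: "irr_cover \<psi> k T n U" and U_ne: "U \<noteq> {}"
  shows "\<exists>\<nu>. valid_nu k (card (At T)) \<nu> \<and> psi_a \<psi> k (J_op \<nu> T) \<le> n
           \<and> card U \<le> k ^ psi_d \<psi> k (J_op \<nu> T)"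
proof -
  have psi: "pb_measure \<psi>" using b by (simp add: bounded_measure_def)
  have cover: "is_cover \<psi> k T n U" using U unfolding irr_cover_def by (rule conjunct1)
  then have "finite U" unfolding is_cover_def by (rule conjunct1)
  then obtain us where us: "set us = U" "distinct us" using finite_distinct_list by blast
  have irr: "irr_cover \<psi> k T n (set us)" using U us(1) by simp
  let ?T' = "J_op (cover_labels T us) T"
  have "is_cover \<psi> k T n (set us)" using cover us(1) by simp
  moreover have "us \<noteq> []" using U_ne us(1) by auto
  ultimately have "psi_a \<psi> k ?T' \<le> n" by (rule psi_a_cover_labels_le)
  moreover have "card U \<le> k ^ psi_d \<psi> k ?T'"
  proof -
    have wf': "wf_table k ?T'" by (rule wf_J_op[OF wf cover_labels_finite_nonempty])
    have ne': "snd ?T' \<noteq> []" using ne by (simp add: J_op_def)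
    have k1: "k \<ge> 1" using k by simp
    obtain \<Gamma> where \<Gamma>: "is_dt k ?T' \<Gamma>" "psi_tree \<psi> \<Gamma> = psi_d \<psi> k ?T'"
      using psi_d_attained[OF k1 wf' psi ne'] by blast
    have ndt: "is_ndt k ?T' \<Gamma>" using \<Gamma>(1) by (simp add: is_dt_def)
    have "{..<length us} \<subseteq> {d. \<exists>\<alpha>. cpath \<Gamma> \<alpha> d}"
      using cover_labels_output[OF irr us(2) ndt] by auto
    then have "card {..<length us} \<le> card {d. \<exists>\<alpha>. cpath \<Gamma> \<alpha> d}"
      by (rule card_mono[OF finite_cpath_decisions])
    moreover have "card U = card {..<length us}" using distinct_card[OF us(2)] us(1) by simp
    moreover have "card {d. \<exists>\<alpha>. cpath \<Gamma> \<alpha> d} \<le> k ^ psi_tree \<psi> \<Gamma>"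
      using card_dt_decisions_le[OF _ \<Gamma>(1) b] k by simp
    ultimately show ?thesis using \<Gamma>(2) by simp
  qed
  moreover have "valid_nu k (card (At T)) (cover_labels T us)"
    using cover_labels_finite_nonempty by (simp add: valid_nu_def)
  ultimately show ?thesis by blast
qed

section \<open>Closed classes and the functions L and H\<close>

lemma keep_first_id:
  assumes dist: "distinct (map fst xs)"
  shows "keep_first xs = xs"
proof -
  have first: "\<forall>j<i. fst (xs ! j) \<noteq> fst (xs ! i)" if "i < length xs" for i
    using dist that by (auto simp: distinct_conv_nth)
  have "keep_first xs = concat (map (\<lambda>i. [xs ! i]) [0..<length xs])"
    unfolding keep_first_def by (rule arg_cong[where f = concat], rule map_cong) (auto simp: first)
  also have "\<dots> = xs" by (simp add: map_nth)
  finally show ?thesis .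
qed

lemma I_op_empty:
  assumes wf: "wf_table k T" and ne: "fst T \<noteq> []"
  shows "I_op {} T = T"
proof -
  have keys: "distinct (map fst (snd T))" using wf unfolding wf_table_def by blast
  have "map (\<lambda>rd. ([fst rd ! i. i \<leftarrow> [0..<length (fst T)], fst T ! i \<notin> {}], snd rd)) (snd T) = snd T"
  proof (rule map_idI)
    fix rd assume "rd \<in> set (snd T)"
    then have "length (fst rd) = length (fst T)" using wf unfolding wf_table_def by blast
    then have "[fst rd ! i. i \<leftarrow> [0..<length (fst T)], fst T ! i \<notin> {}] = fst rd"
      using map_nth[of "fst rd"] by simp
    then show "([fst rd ! i. i \<leftarrow> [0..<length (fst T)], fst T ! i \<notin> {}], snd rd) = rd" by simp
  qed
  then show ?thesis using ne keys unfolding I_op_def by (simp add: keep_first_id)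
qed

lemma J_op_in_closure_table:
  assumes "wf_table k T" "snd T \<noteq> []" "valid_nu k (card (At T)) \<nu>"
  shows "J_op \<nu> T \<in> closure_table k T"
proof -
  have "fst T \<noteq> []" using assms(1,2) unfolding wf_table_def by blast
  then have "J_op \<nu> T = J_op \<nu> (I_op {} T)" using I_op_empty[OF assms(1)] by simp
  then show ?thesis using assms(3) unfolding closure_table_def by fastforce
qed

lemma L_fun_SomeD:
  assumes "L_fun \<psi> k A n = Some l" "A \<noteq> {}"
  shows "\<exists>T\<in>A. l_psi \<psi> k T n = l" and "\<forall>T\<in>A. l_psi \<psi> k T n \<le> l"
proof -
  let ?S = "{l_psi \<psi> k T n | T. T \<in> A}"
  have fin: "finite ?S" and l: "l = Max ?S"
    using assms(1) unfolding L_fun_def Let_def by (auto split: if_splits)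
  have "?S \<noteq> {}" using assms(2) by blast
  then have "l \<in> ?S" using Max_in[OF fin] l by simp
  then show "\<exists>T\<in>A. l_psi \<psi> k T n = l" by blast
  show "\<forall>T\<in>A. l_psi \<psi> k T n \<le> l"
  proof
    fix T assume "T \<in> A"
    then have "l_psi \<psi> k T n \<in> ?S" by blast
    then show "l_psi \<psi> k T n \<le> l" using Max_ge[OF fin] l by simp
  qed
qed

lemma H_fun_SomeI:
  assumes bound: "\<forall>T\<in>A. psi_a \<psi> k T \<le> n \<longrightarrow> psi_d \<psi> k T \<le> b"
    and T: "T \<in> A" "psi_a \<psi> k T \<le> n"
  shows "\<exists>h. H_fun \<psi> k A n = Some h \<and> psi_d \<psi> k T \<le> h"
proof -
  let ?S = "{psi_d \<psi> k T | T. T \<in> A \<and> psi_a \<psi> k T \<le> n}"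
  have "?S \<subseteq> {..b}" using bound by auto
  then have fin: "finite ?S" using finite_subset by blast
  moreover have "psi_d \<psi> k T \<in> ?S" using T by blast
  ultimately have "psi_d \<psi> k T \<le> Max ?S" by (rule Max_ge)
  moreover have "H_fun \<psi> k A n = Some (Max ?S)" using fin unfolding H_fun_def Let_def by simp
  ultimately show ?thesis by blast
qed

theorem lemma5:
  fixes k :: nat and A :: "dtable set" and \<psi> :: "nat list \<Rightarrow> nat"
  assumes "k \<ge> 2"
    and "closed_class k A" and "nontrivial A"
    and "bounded_measure \<psi>"
    and "\<forall>n. L_fun \<psi> k A n \<noteq> None"
  shows "\<forall>n l. L_fun \<psi> k A n = Some l \<and> l > 0 \<longrightarrow>
           (\<exists>h. H_fun \<psi> k A n = Some h \<and> log (real k) (real l) \<le> real h)"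
proof (intro allI impI, elim conjE)
  fix n l assume L: "L_fun \<psi> k A n = Some l" and "l > 0"
  have A: "A \<noteq> {}" "closure_class k A = A" and wf: "\<And>T. T \<in> A \<Longrightarrow> wf_table k T"
    using assms(2) unfolding closed_class_def M_inf_def by auto
  obtain T where T: "T \<in> A" "l_psi \<psi> k T n = l" using L_fun_SomeD(1)[OF L A(1)] by blast
  then have ne: "snd T \<noteq> []" using \<open>l > 0\<close> by (auto simp: l_psi_def)
  obtain U where U: "irr_cover \<psi> k T n U" "card U = l"
    using l_psi_attained[OF assms(4) ne] T(2) by blast
  then obtain \<nu> where \<nu>: "valid_nu k (card (At T)) \<nu>" "psi_a \<psi> k (J_op \<nu> T) \<le> n"
      "l \<le> k ^ psi_d \<psi> k (J_op \<nu> T)"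
    using exists_relabelling_bounds[OF assms(1) wf[OF T(1)] assms(4) ne] \<open>l > 0\<close> by force
  have "J_op \<nu> T \<in> A"
    using J_op_in_closure_table[OF wf[OF T(1)] ne \<nu>(1)] T(1) A(2) unfolding closure_class_def by blast
  moreover have "\<forall>T\<in>A. psi_a \<psi> k T \<le> n \<longrightarrow> psi_d \<psi> k T \<le> l * n"
    using psi_d_le_l_psi_mult[OF _ wf assms(4)] L_fun_SomeD(2)[OF L A(1)] assms(1)
    by (metis le_trans mult_le_mono1 one_le_numeral)
  ultimately obtain h where "H_fun \<psi> k A n = Some h" "psi_d \<psi> k (J_op \<nu> T) \<le> h"
    using H_fun_SomeI \<nu>(2) by blast
  moreover have "log (real k) (real l) \<le> real (psi_d \<psi> k (J_op \<nu> T))"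
    using log_of_power_le[of l "real k"] \<nu>(3) assms(1) \<open>l > 0\<close> by (simp add: of_nat_le_iff[symmetric])
  ultimately show "\<exists>h. H_fun \<psi> k A n = Some h \<and> log (real k) (real l) \<le> real h" by force
qed

end
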